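(* Let $\gamma\in\Gamma_m(r,s,n)$ be connected (its underlying graph on $[n]$ is connected). Then there exist $n-1$ distinct edges $f_1,\dots,f_{n-1}$ of $E_1$ and an enumeration $[n]=\{v_0,v_1,\dots,v_{n-1}\}$ of the vertices such that, for every $\ell=1,\dots,n-1$: (1) $f_\ell$ is (the underlying edge of) a step of the walk $w_{v_\ell}(\gamma)$; and (2) there exists $j<\ell$ such that $f_\ell$ is also (the underlying edge of) a step of the walk $w_{v_j}(\gamma)$.
   Context: Fix positive integers $r,s,n$ with $s\mid r$. $\Gamma_m(r,s,n)$ is the set of decorated graphs on vertex set $[n]=\{1,\dots,n\}$ with an ordered list of $m$ edges $E=(e_1,\dots,e_m)$, each edge a multiset $\{i,j\}$ with $i,j\in[n]$ (self-edges and repeated edges allowed; edges at different positions are distinct), with integer labels $\kappa(e)$ satisfying $0\le\kappa(e)<r$ for $e\in E_1$ and $0<\kappa(e)<r/s$ for $e\in E_2$, where $E_1$ (resp. $E_2$) is the sublist of edges with two distinct vertices (resp. self-edges). A directed edge $\vec e=(i_0,i_1)$ is an edge $\{i_0,i_1\}$ with an order on its vertices. For $i\in[n]$ the ordered walk $w_i(\gamma)$ is defined recursively: set $i_0=i$; let $s_1$ be the first edge in $E$ containing $i_0$, with step $\vec s_1=(i_0,i_1)$ where $i_1$ is its other vertex ($i_1=i_0$ for a self-edge); let $s_2$ be the first edge after $s_1$ in $E$ containing $i_1$, with step $(i_1,i_2)$; and so on until no later edge contains the current vertex. The walk $w_i(\gamma)$ is the resulting sequence of steps. *)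

theory Defs
  imports Main
begin

text \<open>A decorated graph with m edges on vertex set [n] = {1..n} is represented by
  a list E of length m of vertex pairs (the edge at position k is the multiset
  {fst (E!k), snd (E!k)}; edges are identified by their position k < m) together
  with a labelling kappa of positions.\<close>

type_synonym edge = "nat \<times> nat"

definition is_self_edge :: "edge \<Rightarrow> bool" where
  "is_self_edge e \<longleftrightarrow> fst e = snd e"

definition in_Gamma :: "nat \<Rightarrow> nat \<Rightarrow> nat \<Rightarrow> nat \<Rightarrow> edge list \<Rightarrow> (nat \<Rightarrow> int) \<Rightarrow> bool" where
  "in_Gamma m r s n E kappa \<longleftrightarrow>
     length E = m \<and>
     (\<forall>k<m. fst (E!k) \<in> {1..n} \<and> snd (E!k) \<in> {1..n}) \<and>
     (\<forall>k<m. \<not> is_self_edge (E!k) \<longrightarrow> 0 \<le> kappa k \<and> kappa k < int r) \<and>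
     (\<forall>k<m. is_self_edge (E!k) \<longrightarrow> 0 < kappa k \<and> kappa k < int (r div s))"

function walk :: "edge list \<Rightarrow> nat \<Rightarrow> nat \<Rightarrow> (nat \<times> nat \<times> nat) list" where
  "walk E v k =
     (if length E \<le> k then []
      else if fst (E!k) = v \<or> snd (E!k) = v then
        (let w = (if fst (E!k) = v then snd (E!k) else fst (E!k))
         in (k, v, w) # walk E w (Suc k))
      else walk E v (Suc k))"
  by pat_completeness auto
termination by (relation "measure (\<lambda>(E, v, k). length E - k)") auto

definition ordered_walk :: "edge list \<Rightarrow> nat \<Rightarrow> (nat \<times> nat \<times> nat) list" where
  "ordered_walk E i = walk E i 0"

definition walk_edges :: "edge list \<Rightarrow> nat \<Rightarrow> nat set" where
  "walk_edges E i = fst ` set (ordered_walk E i)"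

definition adj :: "edge list \<Rightarrow> (nat \<times> nat) set" where
  "adj E = {(a, b). \<exists>k<length E. E!k = (a, b) \<or> E!k = (b, a)}"

definition connected_graph :: "nat \<Rightarrow> edge list \<Rightarrow> bool" where
  "connected_graph n E \<longleftrightarrow> (\<forall>u\<in>{1..n}. \<forall>v\<in>{1..n}. (u, v) \<in> (adj E)\<^sup>*)"

end

theory Submission
  imports Defs "HOL-Combinatorics.Transposition"
begin

(* Let the edges act on the vertices, in order, as the transpositions of their endpoints.
   Then the walk from i is the trajectory of a walker started at i that moves exactly when the
   current edge touches it; the walkers occupy distinct vertices at all times, so an edge is a
   step of at most two walks. Say two walkers meet if their walks share a proper edge. A set of
   walkers closed under meeting is invariant under every transposition and therefore contains both
   or neither end of each edge, so connectivity of the graph makes meeting connect all of [n].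
   A search order of the meeting graph gives the enumeration v, each f_l being a proper edge
   shared with an earlier walker; f is injective because no edge lies on three walks. *)

definition incident :: "edge \<Rightarrow> nat \<Rightarrow> bool" where
  "incident e v \<longleftrightarrow> fst e = v \<or> snd e = v"

definition swap_ends :: "edge \<Rightarrow> nat \<Rightarrow> nat" where
  "swap_ends e = transpose (fst e) (snd e)"

text \<open>\<open>walker_at E t k x\<close> is the current vertex, just before position \<open>k\<close> is scanned, of the walk
  that stands at \<open>x\<close> just before position \<open>t\<close>. Every edge acts by the transposition of its
  endpoints, which moves a walker exactly when the edge touches it.\<close>
definition walker_at :: "edge list \<Rightarrow> nat \<Rightarrow> nat \<Rightarrow> nat \<Rightarrow> nat" where
  "walker_at E t k x = fold (\<lambda>i. swap_ends (E!i)) [t..<k] x"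

lemma swap_ends_not_incident: "\<not> incident e v \<Longrightarrow> swap_ends e v = v"
  by (auto simp: swap_ends_def incident_def)

lemma walker_at_same [simp]: "walker_at E t t x = x"
  by (simp add: walker_at_def)

lemma walker_at_Suc_start: "t < k \<Longrightarrow> walker_at E t k x = walker_at E (Suc t) k (swap_ends (E!t) x)"
  by (simp add: walker_at_def upt_conv_Cons)

lemma walker_at_Suc: "t \<le> k \<Longrightarrow> walker_at E t (Suc k) x = swap_ends (E!k) (walker_at E t k x)"
  by (simp add: walker_at_def)

lemma bij_walker_at: "bij (walker_at E 0 k)"
proof (induction k)
  case 0
  then show ?case by (simp add: walker_at_def id_def [symmetric])
next
  case (Suc k)
  have "walker_at E 0 (Suc k) = swap_ends (E!k) \<circ> walker_at E 0 k"
    by (simp add: fun_eq_iff walker_at_Suc)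
  then show ?case
    by (metis Suc.IH bij_comp bij_transpose swap_ends_def)
qed

declare walk.simps [simp del]

lemma walk_cons:
  "k < length E \<Longrightarrow> incident (E!k) v \<Longrightarrow>
     walk E v k = (k, v, swap_ends (E!k) v) # walk E (swap_ends (E!k) v) (Suc k)"
  by (subst walk.simps) (auto simp: swap_ends_def transpose_def incident_def Let_def)

lemma walk_skip: "k < length E \<Longrightarrow> \<not> incident (E!k) v \<Longrightarrow> walk E v k = walk E v (Suc k)"
  by (subst walk.simps) (auto simp: incident_def)

lemma walker_at_incident_iff:
  "t \<le> i \<and> i < length E \<and> incident (E!i) (walker_at E t i x) \<longleftrightarrow>
     (i = t \<and> t < length E \<and> incident (E!t) x) \<or>
     (Suc t \<le> i \<and> i < length E \<and> incident (E!i) (walker_at E (Suc t) i (swap_ends (E!t) x)))"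
  by (cases i t rule: linorder_cases) (auto simp: walker_at_Suc_start)

lemma step_positions_walk:
  "fst ` set (walk E x t) = {i. t \<le> i \<and> i < length E \<and> incident (E!i) (walker_at E t i x)}"
proof (induction "length E - t" arbitrary: x t)
  case 0
  then show ?case by (subst walk.simps) auto
next
  case (Suc d)
  then have t: "t < length E" and
    IH: "\<And>y. fst ` set (walk E y (Suc t)) =
      {i. Suc t \<le> i \<and> i < length E \<and> incident (E!i) (walker_at E (Suc t) i y)}"
    by simp_all
  show ?case
  proof (cases "incident (E!t) x")
    case True
    show ?thesis
      unfolding walk_cons[OF t True] walker_at_incident_iff[of t] using IH True t by auto
  next
    case False
    show ?thesis
      unfolding walk_skip[OF t False] walker_at_incident_iff[of t]
      using IH False t swap_ends_not_incident[OF False] by auto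
  qed
qed

lemma walk_edges_iff: "i \<in> walk_edges E p \<longleftrightarrow> i < length E \<and> incident (E!i) (walker_at E 0 i p)"
  by (simp add: walk_edges_def ordered_walk_def step_positions_walk)

lemma walk_edges_at_most_two:
  assumes "i \<in> walk_edges E x" "i \<in> walk_edges E y" "i \<in> walk_edges E z"
  shows "x = y \<or> x = z \<or> y = z"
proof -
  have "walker_at E 0 i x = walker_at E 0 i y \<or> walker_at E 0 i x = walker_at E 0 i z \<or>
      walker_at E 0 i y = walker_at E 0 i z"
    using assms by (auto simp: walk_edges_iff incident_def)
  then show ?thesis
    using bij_is_inj[OF bij_walker_at] by (auto dest: injD)
qed

lemma swap_ends_mem_iff: "(fst e \<in> B \<longleftrightarrow> snd e \<in> B) \<Longrightarrow> swap_ends e y \<in> B \<longleftrightarrow> y \<in> B"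
  by (auto simp: swap_ends_def transpose_def)

lemma walker_at_mem_iff:
  assumes "\<And>i. i < k \<Longrightarrow> fst (E!i) \<in> B \<longleftrightarrow> snd (E!i) \<in> B"
  shows "walker_at E 0 k x \<in> B \<longleftrightarrow> x \<in> B"
  using assms by (induction k) (simp_all add: walker_at_Suc swap_ends_mem_iff)

definition meets :: "edge list \<Rightarrow> nat rel" where
  "meets E = {(p, q). \<exists>i \<in> walk_edges E p \<inter> walk_edges E q. \<not> is_self_edge (E!i)}"

lemma meets_sym: "(p, q) \<in> meets E \<Longrightarrow> (q, p) \<in> meets E"
  by (auto simp: meets_def)

lemma meets_subset:
  assumes "\<forall>i<length E. fst (E!i) \<in> S \<and> snd (E!i) \<in> S"
  shows "meets E \<subseteq> S \<times> S"
proof -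
  have "p \<in> S" if "i \<in> walk_edges E p" for i p
  proof -
    have "walker_at E 0 i p \<in> S"
      using that assms by (auto simp: walk_edges_iff incident_def)
    then show ?thesis
      using that assms walker_at_mem_iff[of i E S p] by (simp add: walk_edges_iff)
  qed
  then show ?thesis by (auto simp: meets_def)
qed

lemma endpoints_mem_iff_if_meets_closed:
  assumes closed: "\<And>p q. (p, q) \<in> meets E \<Longrightarrow> p \<in> A \<Longrightarrow> q \<in> A"
  shows "k < length E \<Longrightarrow> fst (E!k) \<in> A \<longleftrightarrow> snd (E!k) \<in> A"
proof (induction k rule: less_induct)
  case (less k)
  have invariant: "walker_at E 0 k x \<in> A \<longleftrightarrow> x \<in> A" for x
    using less by (intro walker_at_mem_iff) simp
  obtain pa pb where pa: "fst (E!k) = walker_at E 0 k pa" and pb: "snd (E!k) = walker_at E 0 k pb"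
    using bij_is_surj[OF bij_walker_at] by (metis surjD)
  show ?case
  proof (cases "is_self_edge (E!k)")
    case False
    then have "(pa, pb) \<in> meets E"
      using less.prems pa pb by (auto simp: meets_def walk_edges_iff incident_def)
    then have "pa \<in> A \<longleftrightarrow> pb \<in> A"
      using closed meets_sym by blast
    then show ?thesis using invariant pa pb by simp
  qed (simp add: is_self_edge_def)
qed

lemma adj_rtrancl_imp_meets_rtrancl:
  "(u, v) \<in> (adj E)\<^sup>* \<Longrightarrow> (u, v) \<in> (meets E)\<^sup>*"
proof (induction rule: rtrancl_induct)
  case (step y z)
  let ?A = "{q. (u, q) \<in> (meets E)\<^sup>*}"
  obtain k where k: "k < length E" "E!k = (y, z) \<or> E!k = (z, y)"
    using step.hyps(2) by (auto simp: adj_def)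
  have "fst (E!k) \<in> ?A \<longleftrightarrow> snd (E!k) \<in> ?A"
    using k(1) by (intro endpoints_mem_iff_if_meets_closed) (auto intro: rtrancl_into_rtrancl)
  then show ?case using k(2) step.IH by auto
qed simp

lemma rtrancl_crosses_boundary:
  "(x, y) \<in> R\<^sup>* \<Longrightarrow> x \<in> V \<Longrightarrow> y \<notin> V \<Longrightarrow> \<exists>a b. (a, b) \<in> R \<and> a \<in> V \<and> b \<notin> V"
proof (induction rule: rtrancl_induct)
  case (step y z)
  then show ?case by (cases "y \<in> V") auto
qed simp

lemma search_order_prefix:
  assumes "finite S" "R \<subseteq> S \<times> S" "p0 \<in> S" "\<forall>q\<in>S. (p0, q) \<in> R\<^sup>*"
  shows "0 < k \<Longrightarrow> k \<le> card S \<Longrightarrow> \<exists>v. v 0 = p0 \<and> inj_on v {0..<k} \<and> v ` {0..<k} \<subseteq> S \<and>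
      (\<forall>l\<in>{1..<k}. \<exists>j<l. (v j, v l) \<in> R)"
proof (induction k rule: nat_induct_non_zero)
  case 1
  then show ?case using assms(3) by (intro exI[of _ "\<lambda>_. p0"]) auto
next
  case (Suc k)
  then obtain v where v: "v 0 = p0" "inj_on v {0..<k}" "v ` {0..<k} \<subseteq> S"
    "\<forall>l\<in>{1..<k}. \<exists>j<l. (v j, v l) \<in> R" by auto
  let ?V = "v ` {0..<k}"
  have "card ?V < card S" using v(2) Suc.prems by (simp add: card_image)
  then have "\<not> S \<subseteq> ?V" using card_mono[of ?V S] by auto
  then obtain q where "q \<in> S" "q \<notin> ?V" by blast
  moreover have "p0 \<in> ?V" using v(1) Suc.hyps by (metis atLeastLessThan_iff image_eqI le0)
  ultimately obtain j b where jb: "j < k" "(v j, b) \<in> R" "b \<notin> ?V"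
    using assms(4) rtrancl_crosses_boundary[of p0 q R ?V] by auto
  define w where "w = v(k := b)"
  have w_eq: "\<And>i. i < k \<Longrightarrow> w i = v i" by (simp add: w_def)
  have "inj_on w {0..<k}" using v(2) w_eq by (simp add: inj_on_def)
  moreover have "w k \<notin> w ` {0..<k}" using jb(3) w_eq by (simp add: w_def)
  ultimately have "inj_on w {0..<Suc k}" by (simp add: atLeast0_lessThan_Suc)
  moreover have "w ` {0..<Suc k} \<subseteq> S"
    using v(3) jb(2) assms(2) w_eq by (auto simp: atLeast0_lessThan_Suc w_def)
  moreover have "\<exists>j<l. (w j, w l) \<in> R" if l: "l \<in> {1..<Suc k}" for l
  proof (cases "l = k")
    case True
    then show ?thesis using jb(1,2) w_eq by (auto simp: w_def)
  next
    case False
    then have "l \<in> {1..<k}" using l by auto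
    then obtain j where "j < l" "(v j, v l) \<in> R" using v(4) by blast
    then show ?thesis using False l w_eq by (intro exI[of _ j]) auto
  qed
  moreover have "w 0 = p0" using v(1) Suc.hyps by (simp add: w_def)
  ultimately show ?case by blast
qed

lemma exists_search_order:
  assumes "finite S" "R \<subseteq> S \<times> S" "p0 \<in> S" "\<forall>q\<in>S. (p0, q) \<in> R\<^sup>*"
  obtains v where "bij_betw v {0..<card S} S" "\<forall>l\<in>{1..<card S}. \<exists>j<l. (v j, v l) \<in> R"
proof -
  have "0 < card S" using assms(1,3) card_gt_0_iff by blast
  then obtain v where v: "inj_on v {0..<card S}" "v ` {0..<card S} \<subseteq> S"
      "\<forall>l\<in>{1..<card S}. \<exists>j<l. (v j, v l) \<in> R"
    using search_order_prefix[OF assms, of "card S"] by blast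
  have "card (v ` {0..<card S}) = card S" using v(1) by (simp add: card_image)
  then have "v ` {0..<card S} = S" using card_subset_eq[OF assms(1) v(2)] by blast
  then show ?thesis using that v(1,3) by (simp add: bij_betw_def)
qed

lemma exists_inj_shared_with_earlier:
  fixes n :: nat
  assumes "inj_on v {0..<n}"
    and at_most_two: "\<And>i x y z. i \<in> W x \<Longrightarrow> i \<in> W y \<Longrightarrow> i \<in> W z \<Longrightarrow> x = y \<or> x = z \<or> y = z"
    and shared: "\<forall>l\<in>{1..<n}. \<exists>j<l. \<exists>i\<in>W (v j) \<inter> W (v l). P i"
  obtains f where "inj_on f {1..<n}"
    "\<forall>l\<in>{1..<n}. f l \<in> W (v l) \<and> P (f l) \<and> (\<exists>j<l. f l \<in> W (v j))"
proof -
  have "\<forall>l\<in>{1..<n}. \<exists>i. i \<in> W (v l) \<and> P i \<and> (\<exists>j<l. i \<in> W (v j))"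
  proof
    fix l assume "l \<in> {1..<n}"
    then show "\<exists>i. i \<in> W (v l) \<and> P i \<and> (\<exists>j<l. i \<in> W (v j))"
      using bspec[OF shared] by blast
  qed
  from bchoice[OF this] obtain f
    where f: "\<forall>l\<in>{1..<n}. f l \<in> W (v l) \<and> P (f l) \<and> (\<exists>j<l. f l \<in> W (v j))"
    by blast
  have "inj_on f {1..<n}"
  proof (rule linorder_inj_onI')
    fix l l' assume l: "l \<in> {1..<n}" "l' \<in> {1..<n}" "l < l'"
    obtain j where j: "j < l" "f l \<in> W (v j)" using bspec[OF f l(1)] by blast
    have "v j \<noteq> v l" "v j \<noteq> v l'" "v l \<noteq> v l'"
      using assms(1) l j(1) by (auto dest: inj_onD)
    moreover have "f l \<in> W (v l)" "f l' \<in> W (v l')"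
      using bspec[OF f l(1)] bspec[OF f l(2)] by blast+
    ultimately show "f l \<noteq> f l'" using at_most_two[OF j(2)] by metis
  qed
  then show ?thesis using that f by blast
qed

theorem mainTheorem8:
  fixes r s n m :: nat and E :: "edge list" and kappa :: "nat \<Rightarrow> int"
  assumes "0 < r" "0 < s" "0 < n" "s dvd r"
    and "in_Gamma m r s n E kappa"
    and "connected_graph n E"
  shows "\<exists>f :: nat \<Rightarrow> nat. \<exists>v :: nat \<Rightarrow> nat.
     inj_on f {1..n-1} \<and>
     (\<forall>l\<in>{1..n-1}. f l < m \<and> \<not> is_self_edge (E ! f l)) \<and>
     bij_betw v {0..<n} {1..n} \<and>
     (\<forall>l\<in>{1..n-1}. f l \<in> walk_edges E (v l) \<and>
        (\<exists>j<l. f l \<in> walk_edges E (v j)))"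
proof -
  have m: "length E = m" and ends: "\<forall>i<length E. fst (E!i) \<in> {1..n} \<and> snd (E!i) \<in> {1..n}"
    using assms(5) by (simp_all add: in_Gamma_def)
  have reach: "\<forall>q\<in>{1..n}. (1, q) \<in> (meets E)\<^sup>*"
    using assms(6) adj_rtrancl_imp_meets_rtrancl by (simp add: connected_graph_def)
  have one: "1 \<in> {1..n}" using assms(3) by simp
  have card: "card {1..n} = n" by simp
  obtain v where "bij_betw v {0..<card {1..n}} {1..n}"
      "\<forall>l\<in>{1..<card {1..n}}. \<exists>j<l. (v j, v l) \<in> meets E"
    using exists_search_order[OF finite_atLeastAtMost meets_subset[OF ends] one reach] .
  note v = this[unfolded card meets_def mem_Collect_eq case_prod_conv]
  obtain f where f: "inj_on f {1..<n}" "\<forall>l\<in>{1..<n}. f l \<in> walk_edges E (v l) \<and>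
      \<not> is_self_edge (E ! f l) \<and> (\<exists>j<l. f l \<in> walk_edges E (v j))"
    using exists_inj_shared_with_earlier[of v n "walk_edges E", OF bij_betw_imp_inj_on[OF v(1)]
        walk_edges_at_most_two v(2)] .
  have "f l < m" if "l \<in> {1..<n}" for l
    using bspec[OF f(2) that] m by (simp add: walk_edges_iff)
  moreover have "{1..n-1} = {1..<n}" by auto
  ultimately show ?thesis
    using v(1) f by (intro exI[of _ f] exI[of _ v]) simp
qed
end
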